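(* Let $G=\{G_n\}_{n\in\mathbb{Z}}$ be a sequence with values in $\mathbb{D}$ and $G_n=0$ for $n<n_0$ (some $n_0\in\mathbb{Z}$). Suppose that for fixed $m\in\mathbb{Z}$ and $p\in\mathbb{N}$ one has $\sum_{s=m+1}^{m+p}|G_s|\leqslant\frac12$. Then there is an absolute constant $C$ such that for all $z\in\mathbb{T}$, $$|\mathfrak{r}(z,G^{\leqslant m+p})-\mathfrak{r}(z,G^{\leqslant m})|\leqslant C\sum_{s=m+1}^{m+p}|G_s|.$$
   Context: $\mathbb{T}$, $\mathbb{D}$ denote the unit circle and open unit disc. $G^{\leqslant M}=G\chi_{n\leqslant M}$ (finitely supported here). For a finitely supported $H$ with values in $\mathbb{D}$: $\widetilde X_n(z)=I$ below the support, $\widetilde X_n=(1-|H_n|^2)^{-1/2}\begin{pmatrix}1&\overline{H_n}z^{-n}\\ H_nz^n&1\end{pmatrix}\widetilde X_{n-1}$, and above the support $\widetilde X_n=\begin{pmatrix}\mathfrak{a}(z,H)&\mathfrak{b}^{( * )}(z,H)\\ \mathfrak{b}(z,H)&\mathfrak{a}^{( * )}(z,H)\end{pmatrix}$ with $f^{( * )}(z)=\overline{f(\bar z^{-1})}$; $\mathfrak{r}(z,H)=\mathfrak{b}(z,H)/\mathfrak{a}^{( * )}(z,H)$. *)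

theory Defs
  imports "HOL-Analysis.Analysis"
begin

(* 2x2 complex matrices as tuples (x11, x12, x21, x22) *)
type_synonym cmat2 = "complex \<times> complex \<times> complex \<times> complex"

definition mmul2 :: "cmat2 \<Rightarrow> cmat2 \<Rightarrow> cmat2" where
  "mmul2 A B = (case A of (a11, a12, a21, a22) \<Rightarrow> case B of (b11, b12, b21, b22) \<Rightarrow>
     (a11*b11 + a12*b21, a11*b12 + a12*b22, a21*b11 + a22*b21, a21*b12 + a22*b22))"

definition id2 :: cmat2 where "id2 = (1, 0, 0, 1)"

definition nlft_step :: "complex \<Rightarrow> int \<Rightarrow> complex \<Rightarrow> cmat2" where
  "nlft_step h n z = (let c = complex_of_real (1 / sqrt (1 - (cmod h)^2)) in
     (c, c * cnj h * z powi (-n), c * h * z powi n, c))"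

(* product of the factors for indices L, L+1, ..., L+k-1, later indices multiplied on the left *)
fun nlft_prod :: "(int \<Rightarrow> complex) \<Rightarrow> int \<Rightarrow> nat \<Rightarrow> complex \<Rightarrow> cmat2" where
  "nlft_prod H L 0 z = id2"
| "nlft_prod H L (Suc k) z = mmul2 (nlft_step (H (L + int k)) (L + int k) z) (nlft_prod H L k z)"

definition supp_seq :: "(int \<Rightarrow> complex) \<Rightarrow> int set" where
  "supp_seq H = {n. H n \<noteq> 0}"

(* the matrix X_n(z) for n above the (finite) support of H *)
definition nlft_X :: "complex \<Rightarrow> (int \<Rightarrow> complex) \<Rightarrow> cmat2" where
  "nlft_X z H = (if supp_seq H = {} then id2
     else nlft_prod H (Min (supp_seq H)) (nat (Max (supp_seq H) - Min (supp_seq H) + 1)) z)"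

definition nlft_a :: "complex \<Rightarrow> (int \<Rightarrow> complex) \<Rightarrow> complex" where
  "nlft_a z H = fst (nlft_X z H)"

definition nlft_b :: "complex \<Rightarrow> (int \<Rightarrow> complex) \<Rightarrow> complex" where
  "nlft_b z H = fst (snd (snd (nlft_X z H)))"

definition star_fun :: "(complex \<Rightarrow> complex) \<Rightarrow> complex \<Rightarrow> complex" where
  "star_fun f z = cnj (f (inverse (cnj z)))"

definition nlft_r :: "complex \<Rightarrow> (int \<Rightarrow> complex) \<Rightarrow> complex" where
  "nlft_r z H = nlft_b z H / star_fun (\<lambda>w. nlft_a w H) z"

definition trunc_le :: "(int \<Rightarrow> complex) \<Rightarrow> int \<Rightarrow> int \<Rightarrow> complex" where
  "trunc_le G M = (\<lambda>n. if n \<le> M then G n else 0)"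

end

theory Submission imports Defs begin

text \<open>On the unit circle every transfer matrix has the SU(1,1) shape
  \<open>(a, cnj b, b, cnj a)\<close> with \<open>|a|\<^sup>2 - |b|\<^sup>2 = 1\<close>, so \<open>\<frak>r = b / cnj a\<close>.
  Appending one factor with coefficient \<open>h\<close> at position \<open>s\<close> changes \<open>\<frak>r\<close> by
  \<open>h z\<^sup>s / (cnj a (cnj a + h z\<^sup>s cnj b))\<close>; since \<open>|a| \<ge> 1\<close> and \<open>|b| \<le> |a|\<close>
  this has modulus at most \<open>|h| / (1 - |h|)\<close>, i.e. at most \<open>2|h|\<close> when \<open>|h| \<le> 1/2\<close>.
  Telescoping over \<open>s = m+1, \<dots>, m+p\<close> gives the theorem with \<open>C = 2\<close>.\<close>

lemma mmul2_assoc: "mmul2 (mmul2 A B) C = mmul2 A (mmul2 B C)"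
  by (cases A; cases B; cases C) (simp add: mmul2_def algebra_simps)

lemma mmul2_id2_left [simp]: "mmul2 id2 A = A"
  by (cases A) (simp add: mmul2_def id2_def)

lemma mmul2_id2_right [simp]: "mmul2 A id2 = A"
  by (cases A) (simp add: mmul2_def id2_def)

lemma nlft_step_zero [simp]: "nlft_step 0 n z = id2"
  by (simp add: nlft_step_def id2_def)

lemma nlft_prod_eq_id2: "(\<And>i. i < k \<Longrightarrow> H (L + int i) = 0) \<Longrightarrow> nlft_prod H L k z = id2"
  by (induction k) auto

lemma nlft_prod_add:
  "nlft_prod H L (i + j) z = mmul2 (nlft_prod H (L + int i) j z) (nlft_prod H L i z)"
  by (induction j) (simp_all add: mmul2_assoc algebra_simps)

lemma nlft_prod_cong:
  "(\<And>i. i < k \<Longrightarrow> H (L + int i) = H' (L + int i)) \<Longrightarrow> nlft_prod H L k z = nlft_prod H' L k z"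
  by (induction k) auto

text \<open>Zero coefficients contribute identity factors, so any window containing the support
  computes \<open>nlft_X\<close>.\<close>

lemma nlft_X_eq_nlft_prod:
  assumes supp: "\<And>n. H n \<noteq> 0 \<Longrightarrow> L \<le> n \<and> n < L + int k"
  shows "nlft_X z H = nlft_prod H L k z"
proof (cases "supp_seq H = {}")
  case True
  then have "nlft_prod H L k z = id2"
    by (intro nlft_prod_eq_id2) (auto simp: supp_seq_def)
  with True show ?thesis by (simp add: nlft_X_def)
next
  case False
  define S where "S = supp_seq H"
  have "S \<subseteq> {L..<L + int k}" using supp by (auto simp: S_def supp_seq_def)
  then have fin: "finite S" by (rule finite_subset) simp
  define lo where "lo = Min S"
  define hi where "hi = Max S"
  have "lo \<in> S" "hi \<in> S" using fin False by (simp_all add: lo_def hi_def S_def)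
  then have lo_hi: "L \<le> lo" "lo \<le> hi" "hi < L + int k"
    using supp fin by (auto simp: S_def supp_seq_def hi_def)
  have outside: "H n = 0" if "n < lo \<or> hi < n" for n
  proof (rule ccontr)
    assume "H n \<noteq> 0"
    then have "lo \<le> n \<and> n \<le> hi" using fin by (simp add: lo_def hi_def S_def supp_seq_def)
    with that show False by linarith
  qed
  define i where "i = nat (lo - L)"
  define j where "j = nat (hi - lo + 1)"
  have k: "k = i + (j + (k - i - j))" "L + int i = lo" "lo + int j = hi + 1"
    using lo_hi by (simp_all add: i_def j_def)
  have "nlft_prod H L k z
      = mmul2 (mmul2 (nlft_prod H (lo + int j) (k - i - j) z) (nlft_prod H lo j z))
          (nlft_prod H L i z)"
    by (subst k(1)) (simp only: nlft_prod_add k(2))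
  also have "nlft_prod H L i z = id2"
    by (rule nlft_prod_eq_id2) (auto intro!: outside simp: i_def)
  also have "nlft_prod H (lo + int j) (k - i - j) z = id2"
    by (rule nlft_prod_eq_id2) (auto intro!: outside simp: k(3))
  finally have "nlft_prod H L k z = nlft_prod H lo j z" by simp
  with False show ?thesis by (simp add: nlft_X_def S_def lo_def hi_def j_def)
qed

lemma nlft_X_fun_upd_top:
  assumes above: "\<And>n. s \<le> n \<Longrightarrow> H n = 0" and below: "\<And>n. n < lb \<Longrightarrow> H n = 0"
  shows "nlft_X z (H(s := h)) = mmul2 (nlft_step h s z) (nlft_X z H)"
proof -
  define L where "L = min lb s"
  define k where "k = nat (s - L)"
  have Lk: "L + int k = s" by (simp add: L_def k_def)
  have supp: "L \<le> n \<and> n < s" if "H n \<noteq> 0" for n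
  proof -
    have "n < s" "lb \<le> n" using that above below not_le by blast+
    then show ?thesis by (simp add: L_def)
  qed
  have "nlft_X z (H(s := h)) = nlft_prod (H(s := h)) L (Suc k) z"
  proof (rule nlft_X_eq_nlft_prod)
    show "L \<le> n \<and> n < L + int (Suc k)" if "(H(s := h)) n \<noteq> 0" for n
      using supp[of n] that Lk by (cases "n = s") (auto simp: L_def)
  qed
  also have "\<dots> = mmul2 (nlft_step h s z) (nlft_prod (H(s := h)) L k z)"
    by (simp add: Lk)
  also have "nlft_prod (H(s := h)) L k z = nlft_prod H L k z"
    by (rule nlft_prod_cong) (use Lk in auto)
  also have "\<dots> = nlft_X z H"
    by (rule nlft_X_eq_nlft_prod[symmetric]) (use supp Lk in auto)
  finally show ?thesis .
qed

lemma cnj_eq_inverse_if_norm_1: "cmod z = 1 \<Longrightarrow> cnj z = inverse z"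
  by (metis complex_norm_square inverse_unique mult_cancel_left2 of_real_1 power_one)

lemma cmod_square_diff_eq_1_iff:
  "(cmod a)\<^sup>2 - (cmod b)\<^sup>2 = 1 \<longleftrightarrow> a * cnj a - b * cnj b = 1"
proof -
  have "a * cnj a - b * cnj b = complex_of_real ((cmod a)\<^sup>2 - (cmod b)\<^sup>2)"
    by (simp only: of_real_diff complex_norm_square)
  then show ?thesis by (metis of_real_1 of_real_eq_iff)
qed

definition su11 :: "cmat2 \<Rightarrow> bool" where
  "su11 M \<longleftrightarrow> (\<exists>a b. M = (a, cnj b, b, cnj a) \<and> (cmod a)\<^sup>2 - (cmod b)\<^sup>2 = 1)"

lemma su11_id2: "su11 id2"
  unfolding su11_def id2_def by (intro exI[of _ 1] exI[of _ 0]) simp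

lemma su11_mmul2:
  assumes "su11 A" "su11 B"
  shows "su11 (mmul2 A B)"
proof -
  obtain a1 b1 where A: "A = (a1, cnj b1, b1, cnj a1)" "a1 * cnj a1 - b1 * cnj b1 = 1"
    using assms(1) by (auto simp: su11_def cmod_square_diff_eq_1_iff)
  obtain a2 b2 where B: "B = (a2, cnj b2, b2, cnj a2)" "a2 * cnj a2 - b2 * cnj b2 = 1"
    using assms(2) by (auto simp: su11_def cmod_square_diff_eq_1_iff)
  define a where "a = a1 * a2 + cnj b1 * b2"
  define b where "b = b1 * a2 + cnj a1 * b2"
  have "mmul2 A B = (a, cnj b, b, cnj a)"
    by (simp add: A B mmul2_def a_def b_def algebra_simps)
  moreover have "a * cnj a - b * cnj b = (a1 * cnj a1 - b1 * cnj b1) * (a2 * cnj a2 - b2 * cnj b2)"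
    by (simp add: a_def b_def algebra_simps)
  ultimately show ?thesis using A(2) B(2) by (auto simp: su11_def cmod_square_diff_eq_1_iff)
qed

lemma nlft_step_on_circle:
  fixes h :: complex
  assumes "cmod z = 1"
  defines "c \<equiv> 1 / sqrt (1 - (cmod h)\<^sup>2)"
  shows "nlft_step h n z = (of_real c, cnj (c * h * z powi n), c * h * z powi n, of_real c)"
  using assms by (simp add: nlft_step_def Let_def cnj_eq_inverse_if_norm_1 power_int_minus power_int_inverse)

lemma su11_nlft_step:
  assumes z: "cmod z = 1" and h: "cmod h < 1"
  shows "su11 (nlft_step h n z)"
proof -
  define c where "c = 1 / sqrt (1 - (cmod h)\<^sup>2)"
  have "(cmod h)\<^sup>2 < 1" using h by (simp add: power_less_one_iff abs_square_less_1)
  then have "c\<^sup>2 * (1 - (cmod h)\<^sup>2) = 1" by (simp add: c_def power_divide)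
  moreover have "(cmod (complex_of_real c))\<^sup>2 - (cmod (c * h * z powi n))\<^sup>2 = c\<^sup>2 * (1 - (cmod h)\<^sup>2)"
    using z by (simp add: norm_mult norm_power_int power_mult_distrib algebra_simps)
  ultimately show ?thesis
    unfolding su11_def nlft_step_on_circle[OF z] c_def[symmetric] by auto
qed

lemma su11_nlft_prod:
  "cmod z = 1 \<Longrightarrow> (\<And>n. cmod (H n) < 1) \<Longrightarrow> su11 (nlft_prod H L k z)"
  by (induction k) (auto intro: su11_id2 su11_mmul2 su11_nlft_step)

lemma su11_nlft_X:
  "cmod z = 1 \<Longrightarrow> (\<And>n. cmod (H n) < 1) \<Longrightarrow> su11 (nlft_X z H)"
  using su11_nlft_prod su11_id2 by (simp add: nlft_X_def)

lemma nlft_r_on_circle: "cmod z = 1 \<Longrightarrow> nlft_r z H = nlft_b z H / cnj (nlft_a z H)"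
  by (simp add: nlft_r_def star_fun_def nlft_a_def cnj_eq_inverse_if_norm_1)

lemma norm_reflection_update_le:
  fixes a b h w :: complex and c :: real
  assumes ab: "a * cnj a - b * cnj b = 1" and w: "cmod w = 1" and h: "cmod h < 1" and c: "c > 0"
  shows "cmod ((c * h * w * a + c * b) / cnj (c * a + c * cnj h * cnj w * b) - b / cnj a)
    \<le> cmod h / (1 - cmod h)"
proof -
  have norms: "(cmod a)\<^sup>2 - (cmod b)\<^sup>2 = 1" using ab cmod_square_diff_eq_1_iff by blast
  then have "1 \<le> (cmod a)\<^sup>2" "(cmod b)\<^sup>2 \<le> (cmod a)\<^sup>2"
    using zero_le_power2[of "cmod b"] by linarith+
  then have a1: "1 \<le> cmod a" and ba: "cmod b \<le> cmod a"
    using power2_le_imp_le[of 1 "cmod a"] power2_le_imp_le[of "cmod b" "cmod a"] by simp_all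
  define D where "D = cnj a + h * w * cnj b"
  have "cmod a - cmod h * cmod b \<le> cmod D"
    using norm_diff_ineq[of "cnj a" "h * w * cnj b"] w by (simp add: D_def norm_mult)
  moreover have "cmod h * cmod b \<le> cmod h * cmod a" using ba by (simp add: mult_left_mono)
  ultimately have D: "cmod a * (1 - cmod h) \<le> cmod D" by (simp add: algebra_simps)
  have "1 \<le> cmod a * cmod a" using a1 by (metis mult_mono' mult_1 zero_le_one)
  then have "1 - cmod h \<le> cmod a * (cmod a * (1 - cmod h))"
    using mult_right_mono[of 1 "cmod a * cmod a" "1 - cmod h"] h by (simp add: mult.assoc)
  also have "\<dots> \<le> cmod a * cmod D" using D by (simp add: mult_left_mono)
  finally have aD: "1 - cmod h \<le> cmod a * cmod D" .
  have a0: "cnj a \<noteq> 0" and D0: "D \<noteq> 0" using a1 aD h by auto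
  have "cnj (c * a + c * cnj h * cnj w * b) = of_real c * D"
    "c * h * w * a + c * b = of_real c * (h * w * a + b)"
    by (simp_all add: D_def algebra_simps)
  then have "(c * h * w * a + c * b) / cnj (c * a + c * cnj h * cnj w * b) = (h * w * a + b) / D"
    using c by simp
  also have "\<dots> - b / cnj a = h * w * (a * cnj a - b * cnj b) / (cnj a * D)"
    using a0 D0 by (simp add: field_simps D_def)
  finally have "cmod ((c * h * w * a + c * b) / cnj (c * a + c * cnj h * cnj w * b) - b / cnj a)
      = cmod h / (cmod a * cmod D)"
    using ab w by (simp add: norm_mult norm_divide)
  also have "\<dots> \<le> cmod h / (1 - cmod h)"
    using aD h by (intro divide_left_mono) auto
  finally show ?thesis .
qed

lemma norm_nlft_r_fun_upd_top_le:
  assumes z: "cmod z = 1" and H: "\<And>n. cmod (H n) < 1" and h: "cmod h < 1"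
    and above: "\<And>n. s \<le> n \<Longrightarrow> H n = 0" and below: "\<And>n. n < lb \<Longrightarrow> H n = 0"
  shows "cmod (nlft_r z (H(s := h)) - nlft_r z H) \<le> cmod h / (1 - cmod h)"
proof -
  obtain a b where X: "nlft_X z H = (a, cnj b, b, cnj a)" and ab: "a * cnj a - b * cnj b = 1"
    using su11_nlft_X[of z H] z H by (auto simp: su11_def cmod_square_diff_eq_1_iff)
  define c where "c = 1 / sqrt (1 - (cmod h)\<^sup>2)"
  have "(cmod h)\<^sup>2 < 1" using h by (simp add: abs_square_less_1)
  then have c: "c > 0" by (simp add: c_def)
  define w where "w = z powi s"
  have w: "cmod w = 1" using z by (simp add: w_def norm_power_int)
  have "nlft_X z (H(s := h)) = mmul2 (of_real c, cnj (c * h * w), c * h * w, of_real c) (a, cnj b, b, cnj a)"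
  proof -
    have "nlft_step h s z = (of_real c, cnj (c * h * w), c * h * w, of_real c)"
      unfolding c_def w_def by (rule nlft_step_on_circle[OF z])
    then show ?thesis by (simp add: nlft_X_fun_upd_top[OF above below] X)
  qed
  then have "nlft_a z (H(s := h)) = c * a + c * cnj h * cnj w * b"
    "nlft_b z (H(s := h)) = c * h * w * a + c * b"
    by (simp_all add: nlft_a_def nlft_b_def mmul2_def)
  moreover have "nlft_a z H = a" "nlft_b z H = b" by (simp_all add: nlft_a_def nlft_b_def X)
  ultimately have "nlft_r z (H(s := h)) - nlft_r z H
      = (c * h * w * a + c * b) / cnj (c * a + c * cnj h * cnj w * b) - b / cnj a"
    by (simp only: nlft_r_on_circle[OF z])
  with norm_reflection_update_le[OF ab w h c] show ?thesis by (simp only:)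
qed

lemma norm_diff_le_sum_of_increments:
  fixes f :: "int \<Rightarrow> 'a::real_normed_vector"
  assumes "\<And>s. s \<in> {m+1..m + int p} \<Longrightarrow> norm (f s - f (s - 1)) \<le> g s"
  shows "norm (f (m + int p) - f m) \<le> (\<Sum>s\<in>{m+1..m + int p}. g s)"
  using assms
proof (induction p)
  case 0
  then show ?case by simp
next
  case (Suc p)
  define s where "s = m + int (Suc p)"
  have prev: "s - 1 = m + int p" by (simp add: s_def)
  have "{m+1..s} = insert s {m+1..m + int p}" by (auto simp: s_def)
  then have sum: "(\<Sum>t\<in>{m+1..s}. g t) = g s + (\<Sum>t\<in>{m+1..m + int p}. g t)"
    by (simp add: s_def)
  have "norm (f s - f m) \<le> norm (f s - f (s - 1)) + norm (f (s - 1) - f m)"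
    using norm_triangle_ineq[of "f s - f (s - 1)" "f (s - 1) - f m"] by simp
  also have "\<dots> \<le> g s + (\<Sum>t\<in>{m+1..m + int p}. g t)"
    using Suc.prems[of s] Suc.IH Suc.prems unfolding prev by (intro add_mono) (auto simp: s_def)
  finally show ?case by (simp only: s_def[symmetric] sum)
qed

theorem lemma4p3:
  "\<exists>C::real. \<forall>(G::int \<Rightarrow> complex) (m::int) (p::nat).
     (\<forall>n. cmod (G n) < 1) \<longrightarrow> (\<exists>n0. \<forall>n<n0. G n = 0) \<longrightarrow>
     (\<Sum>s\<in>{m+1..m + int p}. cmod (G s)) \<le> 1/2 \<longrightarrow>
     (\<forall>z. cmod z = 1 \<longrightarrow>
        cmod (nlft_r z (trunc_le G (m + int p)) - nlft_r z (trunc_le G m))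
          \<le> C * (\<Sum>s\<in>{m+1..m + int p}. cmod (G s)))"
proof (intro exI[of _ 2] allI impI)
  fix G :: "int \<Rightarrow> complex" and m :: int and p :: nat and z :: complex
  assume G: "\<forall>n. cmod (G n) < 1" and "\<exists>n0. \<forall>n<n0. G n = 0"
    and small: "(\<Sum>s\<in>{m+1..m + int p}. cmod (G s)) \<le> 1/2" and z: "cmod z = 1"
  then obtain n0 where below: "\<forall>n<n0. G n = 0" by blast
  have "cmod (nlft_r z (trunc_le G s) - nlft_r z (trunc_le G (s - 1))) \<le> 2 * cmod (G s)"
    if s: "s \<in> {m+1..m + int p}" for s
  proof -
    have "cmod (G s) \<le> 1/2"
      using member_le_sum[OF s, of "\<lambda>s. cmod (G s)"] small by simp
    then have "cmod (G s) / (1 - cmod (G s)) \<le> cmod (G s) / (1/2)"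
      by (intro divide_left_mono) auto
    moreover have "trunc_le G s = (trunc_le G (s - 1))(s := G s)"
      by (auto simp: trunc_le_def)
    moreover have "cmod (nlft_r z ((trunc_le G (s - 1))(s := G s)) - nlft_r z (trunc_le G (s - 1)))
        \<le> cmod (G s) / (1 - cmod (G s))"
      by (rule norm_nlft_r_fun_upd_top_le[where lb = n0]) (use z G below in \<open>auto simp: trunc_le_def\<close>)
    ultimately show ?thesis by simp
  qed
  then show "cmod (nlft_r z (trunc_le G (m + int p)) - nlft_r z (trunc_le G m))
      \<le> 2 * (\<Sum>s\<in>{m+1..m + int p}. cmod (G s))"
    unfolding sum_distrib_left by (rule norm_diff_le_sum_of_increments)
qed

end
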